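(* Let $\mathcal P$ be a pre-Hahn-localizable family of probability measures on $(\Omega,\mathcal F)$ with a localization $\mathcal Q$ whose supports are pairwise disjoint, and let $\mathcal H_{\mathcal F}^{\mathcal Q}$ be its Hahn-extension. For $\mu\in\mathrm{ca}(\mathcal P)$ and $P\in\mathcal P$ we have $\mu\ll P$ if and only if $\mu^{\mathcal Q}\ll P^{\mathcal Q}$.
   Context: $\mathrm{ca}(\mathcal P)$ is the set of finite signed measures $\mu$ on $\mathcal F$ with $|\mu|\ll P$ for some $P\in\mathcal P$; for signed $\mu$, $\mu\ll P$ means $|\mu|\ll P$. $\mathcal A\lll\mathcal B$ means every $A\in\mathcal A$ is absolutely continuous w.r.t. some $B\in\mathcal B$; $\mathrm{sconv}$ denotes countable convex combinations. $\mathcal P$ is pre-Hahn-localizable with localization $\mathcal Q$ and supports $S_Q\in\mathcal F$ if $Q(S_R)=\delta_{QR}$ for $Q,R\in\mathcal Q$ and $\mathcal Q\lll\mathcal P\lll\mathrm{sconv}(\mathcal Q)$. Hahn-extension: $\mathcal H_{\mathcal F}^{\mathcal Q}=\sigma\big(\mathcal F\cup\{\bigcup_{Q}E_Q:E_Q\in\mathcal F,E_Q\subseteq S_Q\}\big)$. For $\mu\in\mathrm{ca}(\mathcal P)$, $\mathcal Q(\mu)=\{Q:|\mu|(S_Q)>0\}$ (countable) and $\mu^{\mathcal Q}(A)=\sum_{Q\in\mathcal Q(\mu)}\mu(A\cap S_Q)$ for $A\in\mathcal H_{\mathcal F}^{\mathcal Q}$, a finite signed measure extending $\mu$. *)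

theory Defs
  imports "HOL-Probability.Probability"
begin

definition signed_measure_on :: "'a set set \<Rightarrow> ('a set \<Rightarrow> real) \<Rightarrow> bool" where
  "signed_measure_on Sig mu \<longleftrightarrow> mu {} = 0 \<and>
     (\<forall>A :: nat \<Rightarrow> 'a set. range A \<subseteq> Sig \<longrightarrow> disjoint_family A \<longrightarrow>
        (\<lambda>i. mu (A i)) sums mu (\<Union>i. A i))"

definition tvar :: "'a set set \<Rightarrow> ('a set \<Rightarrow> real) \<Rightarrow> 'a set \<Rightarrow> ereal" where
  "tvar Sig mu A = (SUP D \<in> {D. finite D \<and> D \<subseteq> Sig \<and> disjoint D \<and> \<Union>D = A}.
                       ereal (\<Sum>B\<in>D. \<bar>mu B\<bar>))"

definition sabs_cont :: "'a set set \<Rightarrow> ('a set \<Rightarrow> real) \<Rightarrow> ('a set \<Rightarrow> real) \<Rightarrow> bool" where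
  "sabs_cont Sig mu nu \<longleftrightarrow> (\<forall>A\<in>Sig. nu A = 0 \<longrightarrow> tvar Sig mu A = 0)"

definition ca :: "'a measure \<Rightarrow> 'a measure set \<Rightarrow> ('a set \<Rightarrow> real) set" where
  "ca M Ps = {mu. signed_measure_on (sets M) mu \<and> (\<exists>P\<in>Ps. sabs_cont (sets M) mu (measure P))}"

text \<open>A <<< B: every A in As is absolutely continuous w.r.t. some B in Bs
  (absolutely_continuous B A means null_sets B \<subseteq> null_sets A, i.e. A << B).\<close>
definition lll :: "'a measure set \<Rightarrow> 'a measure set \<Rightarrow> bool" where
  "lll As Bs \<longleftrightarrow> (\<forall>A\<in>As. \<exists>B\<in>Bs. absolutely_continuous B A)"

definition sconv :: "'a measure \<Rightarrow> 'a measure set \<Rightarrow> 'a measure set" where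
  "sconv M Qs = {R. sets R = sets M \<and>
     (\<exists>(q :: nat \<Rightarrow> 'a measure) (w :: nat \<Rightarrow> real). range q \<subseteq> Qs \<and> (\<forall>n. 0 \<le> w n) \<and> w sums 1 \<and>
        (\<forall>A\<in>sets M. emeasure R A = (\<Sum>n. ennreal (w n) * emeasure (q n) A)))}"

definition pre_hahn_localizable ::
    "'a measure \<Rightarrow> 'a measure set \<Rightarrow> 'a measure set \<Rightarrow> ('a measure \<Rightarrow> 'a set) \<Rightarrow> bool" where
  "pre_hahn_localizable M Ps Qs S \<longleftrightarrow>
     (\<forall>Q\<in>Qs. prob_space Q \<and> sets Q = sets M \<and> S Q \<in> sets M) \<and>
     (\<forall>Q\<in>Qs. \<forall>R\<in>Qs. measure Q (S R) = (if Q = R then 1 else 0)) \<and>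
     lll Qs Ps \<and> lll Ps (sconv M Qs)"

definition hahn_ext :: "'a measure \<Rightarrow> 'a measure set \<Rightarrow> ('a measure \<Rightarrow> 'a set) \<Rightarrow> 'a set set" where
  "hahn_ext M Qs S = sigma_sets (space M)
     (sets M \<union> {(\<Union>Q\<in>Qs. E Q) | E. \<forall>Q\<in>Qs. E Q \<in> sets M \<and> E Q \<subseteq> S Q})"

definition Qof :: "'a measure \<Rightarrow> 'a measure set \<Rightarrow> ('a measure \<Rightarrow> 'a set) \<Rightarrow> ('a set \<Rightarrow> real) \<Rightarrow> 'a measure set" where
  "Qof M Qs S mu = {Q\<in>Qs. tvar (sets M) mu (S Q) > 0}"

definition loc_ext :: "'a measure \<Rightarrow> 'a measure set \<Rightarrow> ('a measure \<Rightarrow> 'a set) \<Rightarrow> ('a set \<Rightarrow> real) \<Rightarrow> 'a set \<Rightarrow> real" where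
  "loc_ext M Qs S mu A = infsum (\<lambda>Q. mu (A \<inter> S Q)) (Qof M Qs S mu)"

end

theory Submission
  imports Defs
begin

text \<open>
  Every set A of the Hahn extension meets each support in a set A \<inter> S Q of the original
  sigma-algebra, because distinct supports are disjoint. P^Q(A) is a sum of the non-negative
  terms P(A \<inter> S Q), so it vanishes only if all of them do, and then \<mu> \<lless> P kills every term
  of \<mu>^Q on subsets of A. Conversely, \<mu>^Q agrees with \<mu> on subsets of the supports
  charged by |\<mu>|, and \<mu> vanishes on subsets of the other supports. Since \<mu> \<lless> P' for some
  P' dominated by a countable mixture of members of the localization, \<mu> lives on a countable
  union of supports; hence \<mu> vanishes on all subsets of a P-null set.
\<close>

lemma abs_le_tvar:
  assumes "ring_of_sets \<Omega> Sig" "A \<in> Sig" "B \<in> Sig" "B \<subseteq> A"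
  shows "ereal \<bar>f B\<bar> \<le> tvar Sig f A"
proof -
  let ?D = "{B, A - B}"
  have "?D \<in> {D. finite D \<and> D \<subseteq> Sig \<and> disjoint D \<and> \<Union>D = A}"
    using assms by (auto simp: disjoint_def ring_of_sets.Diff)
  then have "ereal (\<Sum>X\<in>?D. \<bar>f X\<bar>) \<le> tvar Sig f A"
    unfolding tvar_def by (rule SUP_upper)
  moreover have "\<bar>f B\<bar> \<le> (\<Sum>X\<in>?D. \<bar>f X\<bar>)"
    by (cases "B = A - B") auto
  ultimately show ?thesis by (meson ereal_less_eq(3) order_trans)
qed

lemma tvar_nonneg:
  assumes "ring_of_sets \<Omega> Sig" "A \<in> Sig"
  shows "0 \<le> tvar Sig f A"
  using abs_le_tvar[OF assms assms(2) order_refl, of f] by (rule order_trans[rotated]) simp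

lemma tvar_eq_0_iff:
  assumes "ring_of_sets \<Omega> Sig" "A \<in> Sig"
  shows "tvar Sig f A = 0 \<longleftrightarrow> (\<forall>B\<in>Sig. B \<subseteq> A \<longrightarrow> f B = 0)"
proof
  assume "tvar Sig f A = 0"
  then show "\<forall>B\<in>Sig. B \<subseteq> A \<longrightarrow> f B = 0"
    using abs_le_tvar[OF assms, of _ f] by fastforce
next
  assume vanish: "\<forall>B\<in>Sig. B \<subseteq> A \<longrightarrow> f B = 0"
  have "tvar Sig f A \<le> 0"
    unfolding tvar_def by (rule SUP_least) (use vanish in \<open>auto intro!: sum_nonpos\<close>)
  then show "tvar Sig f A = 0"
    using tvar_nonneg[OF assms] by (rule antisym)
qed

lemma sabs_cont_iff:
  assumes "ring_of_sets \<Omega> Sig"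
  shows "sabs_cont Sig mu nu \<longleftrightarrow> (\<forall>A\<in>Sig. nu A = 0 \<longrightarrow> (\<forall>B\<in>Sig. B \<subseteq> A \<longrightarrow> mu B = 0))"
  unfolding sabs_cont_def using tvar_eq_0_iff[OF assms] by blast

lemma signed_measure_on_Un:
  assumes "signed_measure_on Sig mu" "{} \<in> Sig" "A \<in> Sig" "B \<in> Sig" "A \<inter> B = {}"
  shows "mu (A \<union> B) = mu A + mu B"
proof -
  have "(\<lambda>n. mu (binaryset A B n)) sums (mu A + mu B)"
    using assms(1) by (intro binaryset_sums) (simp add: signed_measure_on_def)
  moreover have "(\<lambda>n. mu (binaryset A B n)) sums mu (\<Union>n. binaryset A B n)"
  proof -
    have "range (binaryset A B) \<subseteq> Sig" "disjoint_family (binaryset A B)"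
      using assms by (auto simp: range_binaryset_eq disjoint_family_on_def binaryset_def)
    then show ?thesis using assms(1) unfolding signed_measure_on_def by blast
  qed
  ultimately show ?thesis by (simp add: UN_binaryset_eq sums_unique2)
qed

lemma signed_measure_on_UN_eq_0:
  fixes A :: "nat \<Rightarrow> 'a set"
  assumes "signed_measure_on Sig mu" "range A \<subseteq> Sig" "disjoint_family A" "\<And>i. mu (A i) = 0"
  shows "mu (\<Union>i. A i) = 0"
proof -
  have "(\<lambda>i. mu (A i)) sums mu (\<Union>i. A i)"
    using assms(1-3) unfolding signed_measure_on_def by blast
  then show ?thesis by (simp add: assms(4) sums_zero sums_unique2)
qed

lemma summable_on_measure_disjoint_family:
  assumes "finite_measure P" "A ` I \<subseteq> sets P" "disjoint_family_on A I"
  shows "(\<lambda>i. measure P (A i)) summable_on I"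
proof (rule nonneg_bdd_above_summable_on)
  show "bdd_above (sum (\<lambda>i. measure P (A i)) ` {F. F \<subseteq> I \<and> finite F})"
  proof (rule bdd_aboveI)
    fix x assume "x \<in> sum (\<lambda>i. measure P (A i)) ` {F. F \<subseteq> I \<and> finite F}"
    then obtain F where F: "F \<subseteq> I" "finite F" and x: "x = (\<Sum>i\<in>F. measure P (A i))"
      by blast
    have "x = measure P (\<Union>i\<in>F. A i)"
      unfolding x using assms F
      by (intro measure_finite_Union[symmetric])
        (auto simp: disjoint_family_on_mono finite_measure.emeasure_finite)
    also have "\<dots> \<le> measure P (space P)"
      using assms F by (intro finite_measure.bounded_measure) auto
    finally show "x \<le> measure P (space P)" .
  qed
qed simp

lemma ring_of_sets_hahn_ext: "ring_of_sets (space M) (hahn_ext M Qs S)"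
proof -
  have "sigma_algebra (space M) (hahn_ext M Qs S)"
    unfolding hahn_ext_def by (rule sigma_algebra_sigma_sets) (auto dest: sets.sets_into_space)
  then show ?thesis
    by (simp add: algebra.axioms(1) sigma_algebra.axioms(1))
qed

lemma sets_subset_hahn_ext: "sets M \<subseteq> hahn_ext M Qs S"
  unfolding hahn_ext_def by (auto intro: sigma_sets.Basic)

lemma hahn_ext_Int_support:
  assumes disj: "\<forall>Q\<in>Qs. \<forall>R\<in>Qs. Q \<noteq> R \<longrightarrow> S Q \<inter> S R = {}"
    and Q: "Q \<in> Qs" "S Q \<in> sets M"
    and X: "X \<in> hahn_ext M Qs S"
  shows "X \<inter> S Q \<in> sets M"
  using X unfolding hahn_ext_def
proof (induction rule: sigma_sets.induct)
  case (Basic X)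
  then show ?case
  proof
    assume "X \<in> sets M"
    then show ?thesis using Q by auto
  next
    assume "X \<in> {(\<Union>Q\<in>Qs. E Q) | E. \<forall>Q\<in>Qs. E Q \<in> sets M \<and> E Q \<subseteq> S Q}"
    then obtain E where X: "X = (\<Union>Q\<in>Qs. E Q)" and E: "\<forall>Q\<in>Qs. E Q \<in> sets M \<and> E Q \<subseteq> S Q"
      by blast
    have "X \<inter> S Q = E Q"
      using X E Q disj by force
    then show ?thesis using E Q by auto
  qed
next
  case (Compl X)
  have "(space M - X) \<inter> S Q = S Q - X \<inter> S Q"
    using sets.sets_into_space[OF Q(2)] by blast
  then show ?case using Compl Q by auto
next
  case (Union X)
  have "(\<Union>i. X i) \<inter> S Q = (\<Union>i. X i \<inter> S Q)" by blast
  also have "\<dots> \<in> sets M" using Union.IH by (intro sets.countable_nat_UN) auto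
  finally show ?case .
qed simp

lemma sconv_null_outside_supports:
  assumes Qs: "\<forall>Q\<in>Qs. prob_space Q \<and> sets Q = sets M \<and> S Q \<in> sets M"
    and supp: "\<forall>Q\<in>Qs. measure Q (S Q) = 1"
    and R: "R \<in> sconv M Qs"
  obtains q :: "nat \<Rightarrow> 'a measure" where "range q \<subseteq> Qs" "space M - (\<Union>n. S (q n)) \<in> null_sets R"
proof -
  obtain q w where sets_R: "sets R = sets M" and q: "range q \<subseteq> Qs"
    and R_eq: "\<forall>A\<in>sets M. emeasure R A = (\<Sum>n. ennreal (w n) * emeasure (q n) A)"
    using R by (auto simp: sconv_def)
  let ?N = "space M - (\<Union>n. S (q n))"
  have N: "?N \<in> sets M"
    using q Qs by (intro sets.Diff sets.countable_nat_UN) auto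
  have null: "?N \<in> null_sets (q n)" for n
  proof -
    have qn: "prob_space (q n)" "sets (q n) = sets M" "S (q n) \<in> sets (q n)"
      "measure (q n) (S (q n)) = 1"
      using q Qs supp by auto
    have "measure (q n) (space (q n) - S (q n)) = 0"
      using prob_space.prob_compl[OF qn(1,3)] qn(4) by linarith
    then have "space (q n) - S (q n) \<in> null_sets (q n)"
      using sets.compl_sets[OF qn(3)]
      by (simp add: finite_measure.emeasure_eq_measure prob_space.finite_measure[OF qn(1)] null_sets_def)
    moreover have "?N \<subseteq> space (q n) - S (q n)"
      unfolding sets_eq_imp_space_eq[OF qn(2)] by blast
    ultimately show ?thesis
      using N qn(2) by (metis null_sets_subset)
  qed
  then have "emeasure R ?N = 0"
    using R_eq N null_setsD1[OF null] by simp
  then have "?N \<in> null_sets R"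
    using N sets_R by (intro null_setsI) simp_all
  then show ?thesis by (rule that[OF q])
qed

lemma vanishes_on_support_if_notin_Qof:
  assumes "Q \<in> Qs" "S Q \<in> sets M" "Q \<notin> Qof M Qs S mu" "B \<in> sets M" "B \<subseteq> S Q"
  shows "mu B = 0"
proof -
  have "\<not> tvar (sets M) mu (S Q) > 0"
    using assms(1,3) by (simp add: Qof_def)
  then have "tvar (sets M) mu (S Q) = 0"
    using tvar_nonneg[OF sets.ring_of_sets_axioms assms(2), of mu] by (simp add: not_less)
  then show ?thesis
    using tvar_eq_0_iff[OF sets.ring_of_sets_axioms assms(2)] assms(4,5) by blast
qed

lemma loc_ext_eq_on_support:
  assumes disj: "\<forall>Q\<in>Qs. \<forall>R\<in>Qs. Q \<noteq> R \<longrightarrow> S Q \<inter> S R = {}"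
    and "mu {} = 0" "Q \<in> Qof M Qs S mu" "A \<subseteq> S Q"
  shows "loc_ext M Qs S mu A = mu A"
proof -
  have "loc_ext M Qs S mu A = (\<Sum>\<^sub>\<infinity>R\<in>{Q}. mu (A \<inter> S R))"
    unfolding loc_ext_def
  proof (rule infsum_cong_neutral)
    fix R assume "R \<in> Qof M Qs S mu - {Q}"
    then have "A \<inter> S R = {}"
      using assms(3,4) disj by (auto simp: Qof_def)
    then show "mu (A \<inter> S R) = 0"
      using assms(2) by simp
  qed (use assms(3) in auto)
  then show ?thesis
    using assms(4) by (simp add: Int_absorb2)
qed

lemma measure_Int_support_eq_0_if_loc_ext_eq_0:
  assumes P: "finite_measure P" "sets P = sets M"
    and disj: "\<forall>Q\<in>Qs. \<forall>R\<in>Qs. Q \<noteq> R \<longrightarrow> S Q \<inter> S R = {}"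
    and supp: "\<forall>Q\<in>Qs. S Q \<in> sets M"
    and A: "A \<in> hahn_ext M Qs S" "loc_ext M Qs S (measure P) A = 0"
    and Q: "Q \<in> Qs"
  shows "measure P (A \<inter> S Q) = 0"
proof (cases "Q \<in> Qof M Qs S (measure P)")
  case True
  \<comment> \<open>summability matters: a non-summable family has infinite sum 0\<close>
  have "disjoint_family_on (\<lambda>R. A \<inter> S R) (Qof M Qs S (measure P))"
    using disj unfolding disjoint_family_on_def Qof_def by blast
  then have "(\<lambda>R. measure P (A \<inter> S R)) summable_on Qof M Qs S (measure P)"
    using P supp hahn_ext_Int_support[OF disj _ _ A(1)]
    by (intro summable_on_measure_disjoint_family) (auto simp: Qof_def)
  then have "(\<Sum>R\<in>{Q}. measure P (A \<inter> S R)) \<le> loc_ext M Qs S (measure P) A"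
    unfolding loc_ext_def by (rule finite_sum_le_infsum) (use True in auto)
  then show ?thesis
    using A(2) by (simp add: measure_nonneg antisym)
next
  case False
  have "S Q \<in> sets M"
    using supp Q by blast
  then show ?thesis
    using hahn_ext_Int_support[OF disj Q _ A(1)]
    by (intro vanishes_on_support_if_notin_Qof[OF Q _ False]) auto
qed

lemma ca_eq_0_if_eq_0_on_supports:
  assumes ph: "pre_hahn_localizable M Ps Qs S"
    and mu: "mu \<in> ca M Ps"
    and B: "B \<in> sets M"
    and vanish: "\<And>Q C. Q \<in> Qs \<Longrightarrow> C \<in> sets M \<Longrightarrow> C \<subseteq> B \<inter> S Q \<Longrightarrow> mu C = 0"
  shows "mu B = 0"
proof -
  have Qs: "\<forall>Q\<in>Qs. prob_space Q \<and> sets Q = sets M \<and> S Q \<in> sets M"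
    and supp: "\<forall>Q\<in>Qs. measure Q (S Q) = 1"
    and Ps: "lll Ps (sconv M Qs)"
    using ph unfolding pre_hahn_localizable_def by simp_all
  have sm: "signed_measure_on (sets M) mu"
    using mu by (simp add: ca_def)
  obtain P' where "P' \<in> Ps" and mu_P': "sabs_cont (sets M) mu (measure P')"
    using mu unfolding ca_def by blast
  then obtain R where R: "R \<in> sconv M Qs" and P'_R: "absolutely_continuous R P'"
    using Ps unfolding lll_def by blast
  obtain q :: "nat \<Rightarrow> 'a measure" where q: "range q \<subseteq> Qs"
    and null: "space M - (\<Union>n. S (q n)) \<in> null_sets R"
    using sconv_null_outside_supports[OF Qs supp R] by blast
  define U where "U = (\<Union>n. S (q n))"
  have U: "U \<in> sets M"
    using q Qs unfolding U_def by (intro sets.countable_nat_UN) auto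
  have BU: "B - U \<in> sets M"
    using B U by (rule sets.Diff)
  have sets_R: "sets R = sets M"
    using R by (simp add: sconv_def)
  have "B - U \<in> null_sets R"
  proof (rule null_sets_subset[OF null[folded U_def]])
    show "B - U \<in> sets R"
      using BU sets_R by simp
    show "B - U \<subseteq> space M - U"
      using sets.sets_into_space[OF B] by blast
  qed
  then have "B - U \<in> null_sets P'"
    using P'_R unfolding absolutely_continuous_def by blast
  then have "measure P' (B - U) = 0"
    by (simp add: measure_def null_setsD1)
  then have outside: "mu (B - U) = 0"
    using mu_P' BU unfolding sabs_cont_iff[OF sets.ring_of_sets_axioms] by blast
  let ?C = "\<lambda>n. B \<inter> disjointed (\<lambda>n. S (q n)) n"
  have "range (disjointed (\<lambda>n. S (q n))) \<subseteq> sets M"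
    using q Qs by (intro sets.range_disjointed_sets) auto
  then have C: "range ?C \<subseteq> sets M"
    using B by auto
  have "mu (\<Union>n. ?C n) = 0"
  proof (rule signed_measure_on_UN_eq_0[OF sm C])
    show "disjoint_family ?C"
      using disjoint_family_disjointed[of "\<lambda>n. S (q n)"]
      unfolding disjoint_family_on_def by blast
    show "mu (?C n) = 0" for n
    proof (rule vanish)
      show "q n \<in> Qs" "?C n \<in> sets M"
        using q C by auto
      show "?C n \<subseteq> B \<inter> S (q n)"
        using disjointed_subset[of "\<lambda>n. S (q n)" n] by blast
    qed
  qed
  moreover have "(\<Union>n. ?C n) = B \<inter> U"
    unfolding U_def UN_disjointed_eq[of "\<lambda>n. S (q n)", symmetric] by blast
  ultimately have inside: "mu (B \<inter> U) = 0"
    by simp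
  have "mu ((B \<inter> U) \<union> (B - U)) = mu (B \<inter> U) + mu (B - U)"
    by (rule signed_measure_on_Un[OF sm]) (use B U BU in auto)
  moreover have "(B \<inter> U) \<union> (B - U) = B"
    by blast
  ultimately show ?thesis
    using inside outside by simp
qed

lemma loc_ext_sabs_cont_if_sabs_cont:
  assumes P: "finite_measure P" "sets P = sets M"
    and disj: "\<forall>Q\<in>Qs. \<forall>R\<in>Qs. Q \<noteq> R \<longrightarrow> S Q \<inter> S R = {}"
    and supp: "\<forall>Q\<in>Qs. S Q \<in> sets M"
    and mu_P: "sabs_cont (sets M) mu (measure P)"
  shows "sabs_cont (hahn_ext M Qs S) (loc_ext M Qs S mu) (loc_ext M Qs S (measure P))"
  unfolding sabs_cont_iff[OF ring_of_sets_hahn_ext]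
proof (intro ballI impI allI)
  fix A B
  assume A: "A \<in> hahn_ext M Qs S" "loc_ext M Qs S (measure P) A = 0"
    and B: "B \<in> hahn_ext M Qs S" "B \<subseteq> A"
  show "loc_ext M Qs S mu B = 0"
    unfolding loc_ext_def
  proof (rule infsum_0)
    fix Q assume "Q \<in> Qof M Qs S mu"
    then have Q: "Q \<in> Qs" "S Q \<in> sets M"
      using supp by (auto simp: Qof_def)
    have "A \<inter> S Q \<in> sets M" "B \<inter> S Q \<in> sets M"
      using hahn_ext_Int_support[OF disj Q] A(1) B(1) by auto
    moreover have "measure P (A \<inter> S Q) = 0"
      using measure_Int_support_eq_0_if_loc_ext_eq_0[OF P disj supp A Q(1)] .
    ultimately show "mu (B \<inter> S Q) = 0"
      using mu_P B(2) unfolding sabs_cont_iff[OF sets.ring_of_sets_axioms] by blast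
  qed
qed

lemma sabs_cont_if_loc_ext_sabs_cont:
  assumes ph: "pre_hahn_localizable M Ps Qs S"
    and disj: "\<forall>Q\<in>Qs. \<forall>R\<in>Qs. Q \<noteq> R \<longrightarrow> S Q \<inter> S R = {}"
    and mu: "mu \<in> ca M Ps"
    and P: "finite_measure P" "sets P = sets M"
    and loc: "sabs_cont (hahn_ext M Qs S) (loc_ext M Qs S mu) (loc_ext M Qs S (measure P))"
  shows "sabs_cont (sets M) mu (measure P)"
  unfolding sabs_cont_iff[OF sets.ring_of_sets_axioms]
proof (intro ballI impI allI)
  fix A B
  assume A: "A \<in> sets M" "measure P A = 0" and B: "B \<in> sets M" "B \<subseteq> A"
  have supp: "\<forall>Q\<in>Qs. S Q \<in> sets M"
    using ph by (simp add: pre_hahn_localizable_def)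
  have mu_empty: "mu {} = 0"
    using mu by (simp add: ca_def signed_measure_on_def)
  have "loc_ext M Qs S (measure P) A = 0"
    unfolding loc_ext_def
  proof (rule infsum_0)
    fix Q assume "Q \<in> Qof M Qs S (measure P)"
    then have "A \<inter> S Q \<in> sets P"
      using A(1) P(2) supp by (auto simp: Qof_def)
    then have "measure P (A \<inter> S Q) \<le> measure P A"
      using A(1) P by (intro finite_measure.finite_measure_mono) auto
    then show "measure P (A \<inter> S Q) = 0"
      using A(2) by (simp add: measure_nonneg antisym)
  qed
  then have loc_A: "loc_ext M Qs S mu C = 0" if "C \<in> hahn_ext M Qs S" "C \<subseteq> A" for C
    using loc A(1) sets_subset_hahn_ext that
    unfolding sabs_cont_iff[OF ring_of_sets_hahn_ext] by blast
  show "mu B = 0"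
  proof (rule ca_eq_0_if_eq_0_on_supports[OF ph mu B(1)])
    fix Q C assume Q: "Q \<in> Qs" and C: "C \<in> sets M" "C \<subseteq> B \<inter> S Q"
    show "mu C = 0"
    proof (cases "Q \<in> Qof M Qs S mu")
      case True
      then have "mu C = loc_ext M Qs S mu C"
        using loc_ext_eq_on_support[where mu = mu, OF disj mu_empty True] C(2) by simp
      also have "\<dots> = 0"
        using loc_A sets_subset_hahn_ext C B(2) by blast
      finally show ?thesis .
    next
      case False
      then show ?thesis
        using vanishes_on_support_if_notin_Qof[OF Q _ False C(1)] supp Q C(2) by blast
    qed
  qed
qed

theorem lemma4p4:
  fixes M :: "'a measure" and Ps Qs :: "'a measure set" and S :: "'a measure \<Rightarrow> 'a set"
    and mu :: "'a set \<Rightarrow> real" and P :: "'a measure"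
  assumes "\<forall>P'\<in>Ps. prob_space P' \<and> sets P' = sets M"
    and "pre_hahn_localizable M Ps Qs S"
    and "\<forall>Q\<in>Qs. \<forall>R\<in>Qs. Q \<noteq> R \<longrightarrow> S Q \<inter> S R = {}"
    and "mu \<in> ca M Ps"
    and "P \<in> Ps"
  shows "sabs_cont (sets M) mu (measure P) \<longleftrightarrow>
         sabs_cont (hahn_ext M Qs S) (loc_ext M Qs S mu) (loc_ext M Qs S (measure P))"
proof -
  have P: "finite_measure P" "sets P = sets M"
    using assms(1,5) by (auto intro: prob_space.finite_measure)
  have "\<forall>Q\<in>Qs. S Q \<in> sets M"
    using assms(2) by (simp add: pre_hahn_localizable_def)
  then show ?thesis
    using loc_ext_sabs_cont_if_sabs_cont[OF P assms(3)]
      sabs_cont_if_loc_ext_sabs_cont[OF assms(2,3,4) P] by blast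
qed

end
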